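(* For any group $B$ and any positive integer $k$, the composition $$H_2(B_k;\mathbb Z)\xrightarrow{i_*}H_2(B;\mathbb Z)\xrightarrow{\pi_*}H_2(B/B_{2k-1};\mathbb Z)$$ is the zero map, where $i$ is the inclusion and $\pi$ the quotient map.
   Context: $B_k$ denotes the $k$-th term of the lower central series: $B_1=B$, $B_{k+1}=[B,B_k]$. *)

theory Defs
  imports "HOL-Algebra.Algebra"
begin

text \<open>B_1 = B, B_(k+1) = [B, B_k], the subgroup generated by commutators [b,x] with
  b in B and x in B_k. The index 0 is given the value carrier G as well (irrelevant).\<close>

fun lower_central :: "('a, 'b) monoid_scheme \<Rightarrow> nat \<Rightarrow> 'a set" where
  "lower_central G 0 = carrier G"
| "lower_central G (Suc 0) = carrier G"
| "lower_central G (Suc (Suc k)) =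
     generate G { b \<otimes>\<^bsub>G\<^esub> x \<otimes>\<^bsub>G\<^esub> inv\<^bsub>G\<^esub> b \<otimes>\<^bsub>G\<^esub> inv\<^bsub>G\<^esub> x
                 | b x. b \<in> carrier G \<and> x \<in> lower_central G (Suc k) }"

text \<open>C_n(G;Z) is the free abelian group on n-tuples of elements of G; chains are
  finitely supported integer-valued functions on G^n.
  H_2(G;Z) = ker d2 / im d3.\<close>

definition chain2 :: "('a, 'b) monoid_scheme \<Rightarrow> ('a \<times> 'a \<Rightarrow> int) \<Rightarrow> bool" where
  "chain2 G c \<longleftrightarrow> finite {p. c p \<noteq> 0} \<and> (\<forall>p. c p \<noteq> 0 \<longrightarrow> p \<in> carrier G \<times> carrier G)"

definition chain3 :: "('a, 'b) monoid_scheme \<Rightarrow> ('a \<times> 'a \<times> 'a \<Rightarrow> int) \<Rightarrow> bool" where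
  "chain3 G c \<longleftrightarrow> finite {p. c p \<noteq> 0} \<and>
     (\<forall>p. c p \<noteq> 0 \<longrightarrow> p \<in> carrier G \<times> carrier G \<times> carrier G)"

definition bar_d2 :: "('a, 'b) monoid_scheme \<Rightarrow> ('a \<times> 'a \<Rightarrow> int) \<Rightarrow> 'a \<Rightarrow> int" where
  "bar_d2 G c x = (\<Sum>(g, h) \<in> {p. c p \<noteq> 0}.
      c (g, h) * (of_bool (x = h) - of_bool (x = g \<otimes>\<^bsub>G\<^esub> h) + of_bool (x = g)))"

definition bar_d3 :: "('a, 'b) monoid_scheme \<Rightarrow> ('a \<times> 'a \<times> 'a \<Rightarrow> int) \<Rightarrow> 'a \<times> 'a \<Rightarrow> int" where
  "bar_d3 G c y = (\<Sum>(g, h, k) \<in> {p. c p \<noteq> 0}.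
      c (g, h, k) * (of_bool (y = (h, k)) - of_bool (y = (g \<otimes>\<^bsub>G\<^esub> h, k))
                     + of_bool (y = (g, h \<otimes>\<^bsub>G\<^esub> k)) - of_bool (y = (g, h))))"

definition cycle2 :: "('a, 'b) monoid_scheme \<Rightarrow> ('a \<times> 'a \<Rightarrow> int) \<Rightarrow> bool" where
  "cycle2 G z \<longleftrightarrow> chain2 G z \<and> (\<forall>x. bar_d2 G z x = 0)"

definition boundary2 :: "('a, 'b) monoid_scheme \<Rightarrow> ('a \<times> 'a \<Rightarrow> int) \<Rightarrow> bool" where
  "boundary2 G z \<longleftrightarrow> (\<exists>c. chain3 G c \<and> (\<forall>p. bar_d3 G c p = z p))"

definition push2 :: "('a \<Rightarrow> 'c) \<Rightarrow> ('a \<times> 'a \<Rightarrow> int) \<Rightarrow> 'c \<times> 'c \<Rightarrow> int" where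
  "push2 f c p = (\<Sum>q \<in> {q. c q \<noteq> 0 \<and> (f (fst q), f (snd q)) = p}. c q)"

text \<open>The induced map on H_2 is zero iff every 2-cycle is mapped to a 2-boundary.\<close>

definition H2_map_zero ::
  "('a, 'b) monoid_scheme \<Rightarrow> ('c, 'd) monoid_scheme \<Rightarrow> ('a \<Rightarrow> 'c) \<Rightarrow> bool" where
  "H2_map_zero G H f \<longleftrightarrow> (\<forall>z. cycle2 G z \<longrightarrow> boundary2 H (push2 f z))"

end

theory Submission
  imports Defs
begin

text \<open>
  Let N = B_(2k-1), Q = B/N with projection \<pi>, and M = C_2(Q)/\<partial>C_3(Q), the bar 2-chains of Q
  modulo boundaries. The class w(q, q') of [q|q'] - [1|1] is a normalized 2-cocycle of Q with
  values in M, so it defines a central extension E = M \<times>_w Q. Since Q_(2k-1) = 1, also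
  E_(2k) = [E, E_(2k-1)] = 1, hence lifts to E of elements of Q_k commute: w is symmetric on the
  abelian group \<pi>(B_k), and E restricted to \<pi>(B_k) is abelian. There the defects
  \<psi>(h) \<psi>(gh)\<inverse> \<psi>(g) = w(\<pi> g, \<pi> h) of the section \<psi>(g) = (1, \<pi> g) multiply to 1 along every
  2-cycle z of B_k, and this product is the class of \<pi>_* z in M; so \<pi>_* z is a boundary.
\<close>

section \<open>Commutators and the lower central series\<close>

definition commutator :: "('a, 'b) monoid_scheme \<Rightarrow> 'a \<Rightarrow> 'a \<Rightarrow> 'a" where
  "commutator G x y = x \<otimes>\<^bsub>G\<^esub> y \<otimes>\<^bsub>G\<^esub> inv\<^bsub>G\<^esub> x \<otimes>\<^bsub>G\<^esub> inv\<^bsub>G\<^esub> y"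

definition commutators :: "('a, 'b) monoid_scheme \<Rightarrow> 'a set \<Rightarrow> 'a set \<Rightarrow> 'a set" where
  "commutators G S T = {commutator G x y |x y. x \<in> S \<and> y \<in> T}"

context group
begin

lemma mult_inv_cancel_left [simp]: "x \<in> carrier G \<Longrightarrow> y \<in> carrier G \<Longrightarrow> x \<otimes> (inv x \<otimes> y) = y"
  by (simp flip: m_assoc)

lemma inv_mult_cancel_left [simp]: "x \<in> carrier G \<Longrightarrow> y \<in> carrier G \<Longrightarrow> inv x \<otimes> (x \<otimes> y) = y"
  by (simp flip: m_assoc)

lemma commutator_closed [simp]:
  "x \<in> carrier G \<Longrightarrow> y \<in> carrier G \<Longrightarrow> commutator G x y \<in> carrier G"
  by (simp add: commutator_def)

lemma commutators_subset: "S \<subseteq> carrier G \<Longrightarrow> T \<subseteq> carrier G \<Longrightarrow> commutators G S T \<subseteq> carrier G"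
  by (auto simp: commutators_def intro!: commutator_closed)

lemma inv_commutator:
  "x \<in> carrier G \<Longrightarrow> y \<in> carrier G \<Longrightarrow> inv (commutator G x y) = commutator G y x"
  by (simp add: commutator_def inv_mult_group m_assoc)

lemma conj_commutator:
  "g \<in> carrier G \<Longrightarrow> x \<in> carrier G \<Longrightarrow> y \<in> carrier G \<Longrightarrow>
   g \<otimes> commutator G x y \<otimes> inv g = commutator G (g \<otimes> x \<otimes> inv g) (g \<otimes> y \<otimes> inv g)"
  by (simp add: commutator_def inv_mult_group m_assoc)

lemma commutator_inv_left:
  "a \<in> carrier G \<Longrightarrow> y \<in> carrier G \<Longrightarrow>
   commutator G (inv a) y = inv a \<otimes> inv (commutator G a y) \<otimes> a"
  by (simp add: commutator_def inv_mult_group m_assoc)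

lemma commutator_mult_left:
  "a \<in> carrier G \<Longrightarrow> b \<in> carrier G \<Longrightarrow> y \<in> carrier G \<Longrightarrow>
   commutator G (a \<otimes> b) y = (a \<otimes> commutator G b y \<otimes> inv a) \<otimes> commutator G a y"
  by (simp add: commutator_def inv_mult_group m_assoc)

lemma commutator_eq_one_iff:
  assumes "x \<in> carrier G" "y \<in> carrier G"
  shows "commutator G x y = \<one> \<longleftrightarrow> x \<otimes> y = y \<otimes> x"
proof
  have c: "commutator G x y = (x \<otimes> y) \<otimes> inv (y \<otimes> x)"
    using assms by (simp add: commutator_def inv_mult_group m_assoc)
  show "x \<otimes> y = y \<otimes> x" if "commutator G x y = \<one>"
  proof -
    have "x \<otimes> y = commutator G x y \<otimes> (y \<otimes> x)"
      unfolding c using assms by (simp add: m_assoc)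
    then show ?thesis
      using that assms by simp
  qed
  show "commutator G x y = \<one>" if "x \<otimes> y = y \<otimes> x"
    unfolding c using that assms by simp
qed

lemma hall_witt:
  assumes "u \<in> carrier G" "v \<in> carrier G" "w \<in> carrier G"
  shows "(v \<otimes> commutator G (commutator G (inv v) u) w \<otimes> inv v)
       \<otimes> (w \<otimes> commutator G (commutator G (inv w) v) u \<otimes> inv w)
       \<otimes> (u \<otimes> commutator G (commutator G (inv u) w) v \<otimes> inv u) = \<one>"
  using assms by (simp add: commutator_def inv_mult_group m_assoc)

lemma commutator_commutator_in_normal:
  assumes N: "N \<lhd> G" and g: "g \<in> carrier G" and u: "u \<in> carrier G" and y: "y \<in> carrier G"
    and "commutator G (commutator G (inv y) (inv g)) u \<in> N"
    and "commutator G (commutator G (inv u) y) (inv g) \<in> N"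
  shows "commutator G (commutator G g u) y \<in> N"
proof -
  interpret N: normal N G by (rule N)
  define t where "t = inv g \<otimes> commutator G (commutator G g u) y \<otimes> g"
  define s where "s = (y \<otimes> commutator G (commutator G (inv y) (inv g)) u \<otimes> inv y)
                    \<otimes> (u \<otimes> commutator G (commutator G (inv u) y) (inv g) \<otimes> inv u)"
  have "s \<in> N"
    unfolding s_def using assms by (intro N.m_closed N.inv_op_closed2) auto
  moreover have "t \<otimes> s = \<one>"
    unfolding t_def s_def using hall_witt[of u "inv g" y] g u y by (simp add: m_assoc)
  moreover have "t \<in> carrier G" "s \<in> carrier G"
    unfolding t_def s_def using g u y by simp_all
  ultimately have "t \<in> N"
    using inv_equality N.m_inv_closed by metis
  then have "g \<otimes> t \<otimes> inv g \<in> N"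
    using g by (rule N.inv_op_closed2[rotated])
  then show ?thesis
    unfolding t_def using g u y by (simp add: m_assoc)
qed

lemma subgroup_commutators_into_normal:
  assumes N: "N \<lhd> G" and S: "S \<subseteq> carrier G"
  shows "subgroup {x \<in> carrier G. \<forall>y\<in>S. commutator G x y \<in> N} G"
proof -
  interpret N: normal N G by (rule N)
  show ?thesis
  proof (rule subgroupI)
    have "commutator G \<one> y = \<one>" if "y \<in> S" for y
      using that S by (auto simp: commutator_def)
    then show "{x \<in> carrier G. \<forall>y\<in>S. commutator G x y \<in> N} \<noteq> {}"
      by (auto intro!: exI[of _ \<one>])
  next
    fix a assume a: "a \<in> {x \<in> carrier G. \<forall>y\<in>S. commutator G x y \<in> N}"
    have "commutator G (inv a) y \<in> N" if "y \<in> S" for y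
    proof -
      have "a \<in> carrier G" "y \<in> carrier G" "commutator G a y \<in> N"
        using a that S by auto
      then show ?thesis
        by (metis commutator_inv_left inv_closed inv_inv N.inv_op_closed2 N.m_inv_closed)
    qed
    then show "inv a \<in> {x \<in> carrier G. \<forall>y\<in>S. commutator G x y \<in> N}"
      using a by simp
  next
    fix a b
    assume a: "a \<in> {x \<in> carrier G. \<forall>y\<in>S. commutator G x y \<in> N}"
      and b: "b \<in> {x \<in> carrier G. \<forall>y\<in>S. commutator G x y \<in> N}"
    have "commutator G (a \<otimes> b) y \<in> N" if "y \<in> S" for y
    proof -
      have "a \<in> carrier G" "b \<in> carrier G" "y \<in> carrier G"
        "commutator G a y \<in> N" "commutator G b y \<in> N"
        using a b that S by auto
      then show ?thesis
        by (simp add: commutator_mult_left N.m_closed N.inv_op_closed2)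
    qed
    then show "a \<otimes> b \<in> {x \<in> carrier G. \<forall>y\<in>S. commutator G x y \<in> N}"
      using a b by simp
  qed blast
qed

end

lemma (in group_hom) hom_commutator:
  "x \<in> carrier G \<Longrightarrow> y \<in> carrier G \<Longrightarrow> h (commutator G x y) = commutator H (h x) (h y)"
  by (simp add: commutator_def)

lemma (in group_hom) image_commutators:
  assumes "S \<subseteq> carrier G" "T \<subseteq> carrier G"
  shows "h ` commutators G S T = commutators H (h ` S) (h ` T)"
  using assms by (force simp: commutators_def hom_commutator)

lemma lower_central_Suc:
  "0 < j \<Longrightarrow> lower_central G (Suc j) = generate G (commutators G (carrier G) (lower_central G j))"
  by (cases j) (simp_all add: commutators_def commutator_def)

context group
begin

lemma lower_central_normal: "lower_central G j \<lhd> G"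
proof (induction j)
  case (Suc j)
  show ?case
  proof (cases "j = 0")
    case False
    interpret N: normal "lower_central G j" G by (rule Suc)
    show ?thesis
      unfolding lower_central_Suc[OF False[unfolded neq0_conv]]
    proof (rule normal_generateI)
      show "commutators G (carrier G) (lower_central G j) \<subseteq> carrier G"
        by (rule commutators_subset) (simp_all add: N.subset)
      fix c g
      assume "c \<in> commutators G (carrier G) (lower_central G j)" and g: "g \<in> carrier G"
      then obtain b x where c: "c = commutator G b x" and b: "b \<in> carrier G"
        and x: "x \<in> lower_central G j"
        by (auto simp: commutators_def)
      have "g \<otimes> c \<otimes> inv g = commutator G (g \<otimes> b \<otimes> inv g) (g \<otimes> x \<otimes> inv g)"
        unfolding c using g b x N.subset by (auto intro!: conj_commutator)
      moreover have "g \<otimes> x \<otimes> inv g \<in> lower_central G j"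
        using g x by (rule N.inv_op_closed2)
      ultimately show "g \<otimes> c \<otimes> inv g \<in> commutators G (carrier G) (lower_central G j)"
        using g b by (auto simp: commutators_def)
    qed
  qed (simp add: normal_self)
qed (simp add: normal_self)

lemma lower_central_subgroup: "subgroup (lower_central G j) G"
  using lower_central_normal by (rule normal_imp_subgroup)

lemma lower_central_subset: "lower_central G j \<subseteq> carrier G"
  using lower_central_subgroup by (rule subgroup.subset)

lemma lower_central_carrier: "x \<in> lower_central G j \<Longrightarrow> x \<in> carrier G"
  using lower_central_subset by blast

lemma commutator_in_lower_central:
  "0 < j \<Longrightarrow> g \<in> carrier G \<Longrightarrow> x \<in> lower_central G j \<Longrightarrow>
   commutator G g x \<in> lower_central G (Suc j)"
  unfolding lower_central_Suc by (rule generate.incl) (auto simp: commutators_def)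

lemma commutator_in_lower_central':
  assumes "0 < j" "g \<in> carrier G" "x \<in> lower_central G j"
  shows "commutator G x g \<in> lower_central G (Suc j)"
proof -
  have "inv (commutator G g x) \<in> lower_central G (Suc j)"
    using assms by (intro subgroup.m_inv_closed[OF lower_central_subgroup] commutator_in_lower_central)
  then show ?thesis
    using assms lower_central_carrier by (simp add: inv_commutator)
qed

lemma commutator_commutator_in_lower_central:
  assumes i: "0 < i" and j: "0 < j"
    and IH: "\<And>j x y. 0 < j \<Longrightarrow> x \<in> lower_central G i \<Longrightarrow> y \<in> lower_central G j \<Longrightarrow>
      commutator G x y \<in> lower_central G (i + j)"
    and g: "g \<in> carrier G" and u: "u \<in> lower_central G i" and y: "y \<in> lower_central G j"
  shows "commutator G (commutator G g u) y \<in> lower_central G (Suc (i + j))"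
proof (rule commutator_commutator_in_normal[OF lower_central_normal g lower_central_carrier[OF u]
      lower_central_carrier[OF y]])
  have "commutator G (inv y) (inv g) \<in> lower_central G (Suc j)"
    using j g y
    by (intro commutator_in_lower_central' subgroup.m_inv_closed[OF lower_central_subgroup]) auto
  then have "inv (commutator G u (commutator G (inv y) (inv g))) \<in> lower_central G (Suc (i + j))"
    using IH[of "Suc j" u] u by (intro subgroup.m_inv_closed[OF lower_central_subgroup]) simp
  then show "commutator G (commutator G (inv y) (inv g)) u \<in> lower_central G (Suc (i + j))"
    using g u y lower_central_carrier by (simp add: inv_commutator)
  have "commutator G (inv u) y \<in> lower_central G (i + j)"
    using IH[of j "inv u" y] j u y by (simp add: subgroup.m_inv_closed[OF lower_central_subgroup])
  then show "commutator G (commutator G (inv u) y) (inv g) \<in> lower_central G (Suc (i + j))"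
    using i j g by (intro commutator_in_lower_central') auto
qed

lemma lower_central_commutator:
  "0 < i \<Longrightarrow> 0 < j \<Longrightarrow> x \<in> lower_central G i \<Longrightarrow> y \<in> lower_central G j \<Longrightarrow>
   commutator G x y \<in> lower_central G (i + j)"
proof (induction i arbitrary: j x y)
  case (Suc i)
  show ?case
  proof (cases "i = 0")
    case True
    then show ?thesis
      using Suc.prems commutator_in_lower_central by simp
  next
    case False
    define W where
      "W = {w \<in> carrier G. \<forall>y \<in> lower_central G j. commutator G w y \<in> lower_central G (Suc (i + j))}"
    have "commutators G (carrier G) (lower_central G i) \<subseteq> W"
      using commutator_commutator_in_lower_central[of i j] Suc False lower_central_carrier
      by (auto simp: commutators_def W_def)
    then have "lower_central G (Suc i) \<subseteq> W"
      unfolding lower_central_Suc[OF False[unfolded neq0_conv]]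
      by (rule generate_subgroup_incl)
        (unfold W_def, rule subgroup_commutators_into_normal[OF lower_central_normal lower_central_subset])
    then show ?thesis
      using Suc.prems unfolding W_def by auto
  qed
qed simp

lemma lower_central_Suc_eq_one:
  assumes "0 < j" and central: "\<And>x g. x \<in> lower_central G j \<Longrightarrow> g \<in> carrier G \<Longrightarrow> g \<otimes> x = x \<otimes> g"
  shows "lower_central G (Suc j) = {\<one>}"
proof -
  have "commutators G (carrier G) (lower_central G j) \<subseteq> {\<one>}"
    using central lower_central_carrier by (auto simp: commutators_def commutator_eq_one_iff)
  then have "lower_central G (Suc j) \<subseteq> {\<one>}"
    unfolding lower_central_Suc[OF assms(1)] using mono_generate generate_one by blast
  then show ?thesis
    using subgroup.one_closed[OF lower_central_subgroup] by blast
qed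

lemma lower_central_commute:
  assumes "0 < k" "lower_central G (k + k) = {\<one>}"
    and "x \<in> lower_central G k" "y \<in> lower_central G k"
  shows "x \<otimes> y = y \<otimes> x"
  using lower_central_commutator[of k k x y] assms lower_central_carrier
  by (simp add: commutator_eq_one_iff)

end

lemma (in group_hom) image_lower_central:
  assumes surj: "h ` carrier G = carrier H"
  shows "h ` lower_central G j = lower_central H j"
proof (induction j)
  case (Suc j)
  show ?case
  proof (cases "j = 0")
    case False
    then show ?thesis
      using Suc surj
      by (simp add: lower_central_Suc G.lower_central_subset image_commutators
          flip: generate_img[OF G.commutators_subset])
  qed (simp add: surj)
qed (simp add: surj)

lemma (in normal) image_lower_central_Mod:
  "(\<lambda>x. H #> x) ` lower_central G k = lower_central (G Mod H) k"
proof (rule group_hom.image_lower_central)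
  show "group_hom G (G Mod H) (\<lambda>x. H #> x)"
    by (simp add: group_hom_def group_hom_axioms_def is_group factorgroup_is_group r_coset_hom_Mod)
  show "(\<lambda>x. H #> x) ` carrier G = carrier (G Mod H)"
    by (simp add: carrier_FactGroup)
qed

lemma (in group) lower_central_Mod_lower_central:
  "lower_central (G Mod lower_central G j) j = {\<one>\<^bsub>G Mod lower_central G j\<^esub>}"
proof -
  interpret N: normal "lower_central G j" G
    by (rule lower_central_normal)
  have "(\<lambda>x. lower_central G j #> x) ` lower_central G j = {lower_central G j}"
  proof
    show "(\<lambda>x. lower_central G j #> x) ` lower_central G j \<subseteq> {lower_central G j}"
      using N.rcos_const[OF is_group] by blast
    have "lower_central G j #> \<one> = lower_central G j"
      by (rule N.rcos_const[OF is_group N.one_closed])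
    then show "{lower_central G j} \<subseteq> (\<lambda>x. lower_central G j #> x) ` lower_central G j"
      using N.one_closed by (metis empty_subsetI image_eqI insert_subset)
  qed
  then show ?thesis
    using N.image_lower_central_Mod[of j] by simp
qed

section \<open>Extensions by normalized 2-cocycles\<close>

definition cocycle_ext ::
  "('m, 'c) monoid_scheme \<Rightarrow> ('q, 'd) monoid_scheme \<Rightarrow> ('q \<Rightarrow> 'q \<Rightarrow> 'm) \<Rightarrow> ('m \<times> 'q) monoid" where
  "cocycle_ext M Q w =
     \<lparr>carrier = carrier M \<times> carrier Q,
      monoid.mult = (\<lambda>x y. (fst x \<otimes>\<^bsub>M\<^esub> fst y \<otimes>\<^bsub>M\<^esub> w (snd x) (snd y), snd x \<otimes>\<^bsub>Q\<^esub> snd y)),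
      one = (\<one>\<^bsub>M\<^esub>, \<one>\<^bsub>Q\<^esub>)\<rparr>"

lemma cocycle_ext_carrier [simp]: "carrier (cocycle_ext M Q w) = carrier M \<times> carrier Q"
  by (simp add: cocycle_ext_def)

lemma cocycle_ext_mult [simp]:
  "(m, q) \<otimes>\<^bsub>cocycle_ext M Q w\<^esub> (m', q') = (m \<otimes>\<^bsub>M\<^esub> m' \<otimes>\<^bsub>M\<^esub> w q q', q \<otimes>\<^bsub>Q\<^esub> q')"
  by (simp add: cocycle_ext_def)

lemma cocycle_ext_one [simp]: "\<one>\<^bsub>cocycle_ext M Q w\<^esub> = (\<one>\<^bsub>M\<^esub>, \<one>\<^bsub>Q\<^esub>)"
  by (simp add: cocycle_ext_def)

locale normalized_cocycle = M: comm_group M + Q: group Q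
  for M :: "('m, 'c) monoid_scheme" and Q :: "('q, 'd) monoid_scheme" +
  fixes w :: "'q \<Rightarrow> 'q \<Rightarrow> 'm"
  assumes cocycle_closed [simp]: "q \<in> carrier Q \<Longrightarrow> q' \<in> carrier Q \<Longrightarrow> w q q' \<in> carrier M"
    and cocycle_identity: "q \<in> carrier Q \<Longrightarrow> q' \<in> carrier Q \<Longrightarrow> q'' \<in> carrier Q \<Longrightarrow>
      w q q' \<otimes>\<^bsub>M\<^esub> w (q \<otimes>\<^bsub>Q\<^esub> q') q'' = w q' q'' \<otimes>\<^bsub>M\<^esub> w q (q' \<otimes>\<^bsub>Q\<^esub> q'')"
    and cocycle_one_left [simp]: "q \<in> carrier Q \<Longrightarrow> w \<one>\<^bsub>Q\<^esub> q = \<one>\<^bsub>M\<^esub>"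
    and cocycle_one_right [simp]: "q \<in> carrier Q \<Longrightarrow> w q \<one>\<^bsub>Q\<^esub> = \<one>\<^bsub>M\<^esub>"
begin

abbreviation (input) E where "E \<equiv> cocycle_ext M Q w"

lemma group_cocycle_ext: "group E"
proof (rule groupI)
  fix x y z
  assume "x \<in> carrier E" "y \<in> carrier E" "z \<in> carrier E"
  then obtain m1 q1 m2 q2 m3 q3 where xyz: "x = (m1, q1)" "y = (m2, q2)" "z = (m3, q3)"
    and c: "m1 \<in> carrier M" "q1 \<in> carrier Q" "m2 \<in> carrier M" "q2 \<in> carrier Q"
      "m3 \<in> carrier M" "q3 \<in> carrier Q"
    by auto
  have "m1 \<otimes>\<^bsub>M\<^esub> m2 \<otimes>\<^bsub>M\<^esub> w q1 q2 \<otimes>\<^bsub>M\<^esub> m3 \<otimes>\<^bsub>M\<^esub> w (q1 \<otimes>\<^bsub>Q\<^esub> q2) q3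
      = (m1 \<otimes>\<^bsub>M\<^esub> m2 \<otimes>\<^bsub>M\<^esub> m3) \<otimes>\<^bsub>M\<^esub> (w q1 q2 \<otimes>\<^bsub>M\<^esub> w (q1 \<otimes>\<^bsub>Q\<^esub> q2) q3)"
    using c by (simp add: M.m_ac)
  also have "\<dots> = (m1 \<otimes>\<^bsub>M\<^esub> m2 \<otimes>\<^bsub>M\<^esub> m3) \<otimes>\<^bsub>M\<^esub> (w q2 q3 \<otimes>\<^bsub>M\<^esub> w q1 (q2 \<otimes>\<^bsub>Q\<^esub> q3))"
    using c by (simp add: cocycle_identity)
  also have "\<dots> = m1 \<otimes>\<^bsub>M\<^esub> (m2 \<otimes>\<^bsub>M\<^esub> m3 \<otimes>\<^bsub>M\<^esub> w q2 q3) \<otimes>\<^bsub>M\<^esub> w q1 (q2 \<otimes>\<^bsub>Q\<^esub> q3)"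
    using c by (simp add: M.m_ac)
  finally show "x \<otimes>\<^bsub>E\<^esub> y \<otimes>\<^bsub>E\<^esub> z = x \<otimes>\<^bsub>E\<^esub> (y \<otimes>\<^bsub>E\<^esub> z)"
    using xyz c by (simp add: Q.m_assoc)
next
  fix x
  assume "x \<in> carrier E"
  then obtain m q where x: "x = (m, q)" "m \<in> carrier M" "q \<in> carrier Q"
    by auto
  let ?y = "(inv\<^bsub>M\<^esub> m \<otimes>\<^bsub>M\<^esub> inv\<^bsub>M\<^esub> (w (inv\<^bsub>Q\<^esub> q) q), inv\<^bsub>Q\<^esub> q)"
  have "?y \<in> carrier E" "?y \<otimes>\<^bsub>E\<^esub> x = \<one>\<^bsub>E\<^esub>"
    using x by (simp_all add: M.m_ac)
  then show "\<exists>y\<in>carrier E. y \<otimes>\<^bsub>E\<^esub> x = \<one>\<^bsub>E\<^esub>"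
    by blast
qed (auto simp: M.m_ac)

lemma group_hom_snd: "group_hom E Q snd"
proof -
  have "snd \<in> hom E Q"
    by (rule homI) auto
  then show ?thesis
    by (simp add: group_hom_def group_hom_axioms_def group_cocycle_ext Q.is_group)
qed

lemma snd_surj: "snd ` carrier E = carrier Q"
  using M.one_closed by force

lemma cocycle_ext_central:
  assumes "m \<in> carrier M" "x \<in> carrier E"
  shows "x \<otimes>\<^bsub>E\<^esub> (m, \<one>\<^bsub>Q\<^esub>) = (m, \<one>\<^bsub>Q\<^esub>) \<otimes>\<^bsub>E\<^esub> x"
  using assms by (cases x) (simp add: M.m_comm)

lemma lower_central_cocycle_ext_trivial:
  assumes j: "0 < j" and Q_trivial: "lower_central Q j = {\<one>\<^bsub>Q\<^esub>}"
  shows "lower_central E (Suc j) = {\<one>\<^bsub>E\<^esub>}"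
proof (rule group.lower_central_Suc_eq_one[OF group_cocycle_ext j])
  fix x g
  assume x: "x \<in> lower_central E j" and g: "g \<in> carrier E"
  have "snd x \<in> lower_central Q j"
    using x group_hom.image_lower_central[OF group_hom_snd snd_surj] by blast
  moreover have "fst x \<in> carrier M"
    using group.lower_central_carrier[OF group_cocycle_ext x] by auto
  ultimately show "g \<otimes>\<^bsub>E\<^esub> x = x \<otimes>\<^bsub>E\<^esub> g"
    using cocycle_ext_central[OF _ g, of "fst x"] Q_trivial by (cases x) auto
qed

lemma cocycle_symmetric_on_lower_central:
  assumes k: "0 < k" and Q_trivial: "lower_central Q (2 * k - 1) = {\<one>\<^bsub>Q\<^esub>}"
    and q: "q \<in> lower_central Q k" and q': "q' \<in> lower_central Q k"
  shows "w q q' = w q' q \<and> q \<otimes>\<^bsub>Q\<^esub> q' = q' \<otimes>\<^bsub>Q\<^esub> q"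
proof -
  interpret E: group E by (rule group_cocycle_ext)
  interpret snd: group_hom E Q snd by (rule group_hom_snd)
  have E_trivial: "lower_central E (k + k) = {\<one>\<^bsub>E\<^esub>}"
    using lower_central_cocycle_ext_trivial[of "2 * k - 1"] k Q_trivial
    by (simp add: Suc_diff_1 mult_2)
  obtain x where x: "x \<in> lower_central E k" "snd x = q"
    using q snd.image_lower_central[OF snd_surj, of k] by (metis imageE)
  obtain y where y: "y \<in> lower_central E k" "snd y = q'"
    using q' snd.image_lower_central[OF snd_surj, of k] by (metis imageE)
  have c: "fst x \<in> carrier M" "fst y \<in> carrier M" "q \<in> carrier Q" "q' \<in> carrier Q"
    using E.lower_central_carrier[OF x(1)] E.lower_central_carrier[OF y(1)] x(2) y(2)
    by (auto simp: mem_Times_iff)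
  have "x \<otimes>\<^bsub>E\<^esub> y = y \<otimes>\<^bsub>E\<^esub> x"
    using E.lower_central_commute[OF k E_trivial x(1) y(1)] .
  then have "(fst x \<otimes>\<^bsub>M\<^esub> fst y \<otimes>\<^bsub>M\<^esub> w q q', q \<otimes>\<^bsub>Q\<^esub> q')
      = (fst y \<otimes>\<^bsub>M\<^esub> fst x \<otimes>\<^bsub>M\<^esub> w q' q, q' \<otimes>\<^bsub>Q\<^esub> q)"
    using x(2) y(2) by (metis cocycle_ext_mult prod.collapse)
  then have "fst x \<otimes>\<^bsub>M\<^esub> fst y \<otimes>\<^bsub>M\<^esub> w q q' = fst x \<otimes>\<^bsub>M\<^esub> fst y \<otimes>\<^bsub>M\<^esub> w q' q"
    and "q \<otimes>\<^bsub>Q\<^esub> q' = q' \<otimes>\<^bsub>Q\<^esub> q"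
    using c by (simp_all add: M.m_comm)
  then show ?thesis
    using c by (simp add: M.m_assoc)
qed

lemma subgroup_cocycle_ext:
  assumes A: "subgroup A Q"
  shows "subgroup (carrier M \<times> A) E"
proof -
  interpret E: group E by (rule group_cocycle_ext)
  interpret A: subgroup A Q by (rule A)
  show ?thesis
  proof (rule E.subgroupI)
    fix x
    assume x: "x \<in> carrier M \<times> A"
    then have "snd (inv\<^bsub>E\<^esub> x) = inv\<^bsub>Q\<^esub> (snd x)"
      using group_hom.hom_inv[OF group_hom_snd] by auto
    moreover have "inv\<^bsub>E\<^esub> x \<in> carrier E"
      using x A.subset by (intro E.inv_closed) auto
    ultimately show "inv\<^bsub>E\<^esub> x \<in> carrier M \<times> A"
      using x by (auto simp: mem_Times_iff)
  next
    fix x y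
    assume "x \<in> carrier M \<times> A" "y \<in> carrier M \<times> A"
    then show "x \<otimes>\<^bsub>E\<^esub> y \<in> carrier M \<times> A"
      using A.subset by (cases x, cases y) auto
  next
    show "carrier M \<times> A \<noteq> {}"
      using A.one_closed M.one_closed by blast
  qed auto
qed

lemma comm_group_cocycle_ext_restrict:
  assumes A: "subgroup A Q"
    and sym: "\<And>a b. a \<in> A \<Longrightarrow> b \<in> A \<Longrightarrow> w a b = w b a \<and> a \<otimes>\<^bsub>Q\<^esub> b = b \<otimes>\<^bsub>Q\<^esub> a"
  shows "comm_group (E\<lparr>carrier := carrier M \<times> A\<rparr>)"
proof (rule group.group_comm_groupI)
  show "group (E\<lparr>carrier := carrier M \<times> A\<rparr>)"
    by (rule group.subgroup_imp_group[OF group_cocycle_ext subgroup_cocycle_ext[OF A]])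
  fix x y
  assume "x \<in> carrier (E\<lparr>carrier := carrier M \<times> A\<rparr>)" "y \<in> carrier (E\<lparr>carrier := carrier M \<times> A\<rparr>)"
  then show "x \<otimes>\<^bsub>E\<lparr>carrier := carrier M \<times> A\<rparr>\<^esub> y = y \<otimes>\<^bsub>E\<lparr>carrier := carrier M \<times> A\<rparr>\<^esub> x"
    using sym subgroup.subset[OF A] by (auto simp: M.m_comm)
qed

end

context comm_group
begin

lemma finprod_int_pow_sum:
  assumes "finite S" "f \<in> A \<rightarrow> carrier G"
  shows "(\<Otimes>x\<in>A. f x [^] (\<Sum>p\<in>S. e p x :: int)) = (\<Otimes>p\<in>S. \<Otimes>x\<in>A. f x [^] e p x)"
  using assms(1)
proof (induction S rule: finite_induct)
  case (insert p S)
  have fx: "x \<in> A \<Longrightarrow> f x \<in> carrier G" for x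
    using assms(2) by blast
  have "(\<Otimes>x\<in>A. f x [^] (\<Sum>p\<in>insert p S. e p x))
      = (\<Otimes>x\<in>A. f x [^] e p x \<otimes> f x [^] (\<Sum>p\<in>S. e p x))"
    using insert.hyps fx by (intro finprod_cong') (auto simp: int_pow_mult)
  also have "\<dots> = (\<Otimes>x\<in>A. f x [^] e p x) \<otimes> (\<Otimes>p\<in>S. \<Otimes>x\<in>A. f x [^] e p x)"
    using assms(2) insert.IH by (simp add: Pi_def)
  finally show ?case
    using insert.hyps assms(2) by (simp add: Pi_def)
qed (simp add: Pi_def)

lemma finprod_int_pow_indicator:
  assumes "finite A" "a \<in> A" "f \<in> A \<rightarrow> carrier G"
  shows "(\<Otimes>x\<in>A. f x [^] (c * of_bool (x = a) :: int)) = f a [^] c"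
proof -
  have "(\<Otimes>x\<in>A. f x [^] (c * of_bool (x = a))) = (\<Otimes>x\<in>A. if a = x then f x [^] c else \<one>)"
    using assms(3) by (intro finprod_cong') (auto simp: Pi_iff)
  also have "\<dots> = f a [^] c"
    using assms by (intro finprod_singleton) auto
  finally show ?thesis .
qed

lemma finprod_int_pow_indicators:
  assumes A: "finite A" and abd: "a \<in> A" "b \<in> A" "d \<in> A" and f: "f \<in> A \<rightarrow> carrier G"
  shows "(\<Otimes>x\<in>A. f x [^] (c * (of_bool (x = a) - of_bool (x = b) + of_bool (x = d)) :: int))
       = (f a \<otimes> inv (f b) \<otimes> f d) [^] c"
proof -
  have "(\<Otimes>x\<in>A. f x [^] (c * (of_bool (x = a) - of_bool (x = b) + of_bool (x = d))))
      = (\<Otimes>x\<in>A. f x [^] (c * of_bool (x = a)) \<otimes> f x [^] (- c * of_bool (x = b))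
                 \<otimes> f x [^] (c * of_bool (x = d)))"
  proof (rule finprod_cong')
    fix x
    assume "x \<in> A"
    then have fx: "f x \<in> carrier G"
      using f by blast
    have exponent: "c * (of_bool (x = a) - of_bool (x = b) + of_bool (x = d))
        = c * of_bool (x = a) + - c * of_bool (x = b) + c * of_bool (x = d)"
      by (simp add: algebra_simps)
    show "f x [^] (c * (of_bool (x = a) - of_bool (x = b) + of_bool (x = d)))
        = f x [^] (c * of_bool (x = a)) \<otimes> f x [^] (- c * of_bool (x = b))
          \<otimes> f x [^] (c * of_bool (x = d))"
      unfolding exponent by (simp only: int_pow_mult fx)
  qed (use f in \<open>auto simp: Pi_iff\<close>)
  also have "\<dots> = f a [^] c \<otimes> f b [^] (- c) \<otimes> f d [^] c"
    using f finprod_int_pow_indicator[OF A abd(1) f, of c]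
      finprod_int_pow_indicator[OF A abd(2) f, of "- c"] finprod_int_pow_indicator[OF A abd(3) f, of c]
    by (simp add: Pi_iff)
  also have "\<dots> = (f a \<otimes> inv (f b) \<otimes> f d) [^] c"
  proof -
    have "f a \<in> carrier G" "f b \<in> carrier G" "f d \<in> carrier G"
      using f abd by blast+
    then show ?thesis
      by (simp add: int_pow_distrib int_pow_inv int_pow_neg)
  qed
  finally show ?thesis .
qed

end

lemma hom_finprod_comm_group:
  assumes G: "comm_group G" and H: "comm_group H" and h: "h \<in> hom G H"
    and f: "f \<in> S \<rightarrow> carrier G"
  shows "h (finprod G f S) = finprod H (\<lambda>x. h (f x)) S"
proof -
  interpret G: comm_group G by (rule G)
  interpret H: comm_group H by (rule H)
  interpret h: group_hom G H h
    using h by (simp add: group_hom_def group_hom_axioms_def G.is_group H.is_group)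
  show ?thesis
    using f
  proof (induction S rule: infinite_finite_induct)
    case (insert p S)
    then show ?case
      by (simp add: Pi_def)
  qed simp_all
qed

definition chain_group :: "('q, 'd) monoid_scheme \<Rightarrow> ('q \<times> 'q \<Rightarrow> int) monoid" where
  "chain_group Q = \<lparr>carrier = {c. chain2 Q c}, monoid.mult = (\<lambda>a b y. a y + b y), one = (\<lambda>y. 0)\<rparr>"

lemma chain_group_carrier [simp]: "carrier (chain_group Q) = {c. chain2 Q c}"
  and chain_group_mult [simp]: "a \<otimes>\<^bsub>chain_group Q\<^esub> b = (\<lambda>y. a y + b y)"
  and chain_group_one [simp]: "\<one>\<^bsub>chain_group Q\<^esub> = (\<lambda>y. 0)"
  by (simp_all add: chain_group_def)

lemma finite_support_add:
  assumes "finite {p. a p \<noteq> 0}" "finite {p. b p \<noteq> 0}"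
  shows "finite {p. a p + b p \<noteq> (0 :: int)}"
proof -
  have "{p. a p + b p \<noteq> 0} \<subseteq> {p. a p \<noteq> 0} \<union> {p. b p \<noteq> 0}"
    by auto
  then show ?thesis
    using assms by (meson finite_Un finite_subset)
qed

lemma chain2_add:
  assumes "chain2 Q a" "chain2 Q b"
  shows "chain2 Q (\<lambda>y. a y + b y)"
proof -
  have "a p \<noteq> 0 \<or> b p \<noteq> 0" if "a p + b p \<noteq> 0" for p
    using that by auto
  then show ?thesis
    using assms finite_support_add[of a b] unfolding chain2_def by blast
qed

lemma chain2_scale:
  assumes "chain2 Q a"
  shows "chain2 Q (\<lambda>y. n * a y)"
proof -
  have "{p. n * a p \<noteq> 0} \<subseteq> {p. a p \<noteq> 0}"
    by auto
  then show ?thesis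
    using assms unfolding chain2_def by (auto intro: finite_subset)
qed

lemma chain2_diff: "chain2 Q a \<Longrightarrow> chain2 Q b \<Longrightarrow> chain2 Q (\<lambda>y. a y - b y)"
  using chain2_add[of Q a "\<lambda>y. - 1 * b y"] chain2_scale[of Q b "- 1"] by simp

lemma comm_group_chain_group: "comm_group (chain_group Q)"
proof (rule comm_groupI)
  fix x
  assume "x \<in> carrier (chain_group Q)"
  then show "\<exists>y\<in>carrier (chain_group Q). y \<otimes>\<^bsub>chain_group Q\<^esub> x = \<one>\<^bsub>chain_group Q\<^esub>"
    using chain2_scale[of Q x "- 1"] by (intro bexI[of _ "\<lambda>y. - x y"]) simp_all
qed (auto simp: chain2_add, auto simp: chain2_def)

interpretation chain_group: comm_group "chain_group Q"
  by (rule comm_group_chain_group)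

lemma chain_group_inv: "c \<in> carrier (chain_group Q) \<Longrightarrow> inv\<^bsub>chain_group Q\<^esub> c = (\<lambda>y. - c y)"
  using chain2_scale[of Q c "- 1"] by (intro chain_group.inv_equality) auto

lemma chain_group_int_pow:
  assumes "c \<in> carrier (chain_group Q)"
  shows "c [^]\<^bsub>chain_group Q\<^esub> (n :: int) = (\<lambda>y. n * c y)"
proof -
  have nat_pow: "c [^]\<^bsub>chain_group Q\<^esub> (m :: nat) = (\<lambda>y. int m * c y)" for m
    by (induction m) (simp_all add: fun_eq_iff algebra_simps)
  show ?thesis
  proof (cases "n < 0")
    case True
    then show ?thesis
      using assms chain2_scale[of Q c "- n"]
      by (simp add: int_pow_def2 nat_pow chain_group_inv fun_eq_iff)
  qed (simp add: int_pow_def2 nat_pow)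
qed

lemma chain_group_finprod:
  "finite S \<Longrightarrow> f \<in> S \<rightarrow> carrier (chain_group Q) \<Longrightarrow>
   finprod (chain_group Q) f S = (\<lambda>y. \<Sum>p\<in>S. f p y)"
proof (induction S rule: finite_induct)
  case (insert p S)
  then show ?case
    by (simp add: chain_group.finprod_insert)
qed (simp add: fun_eq_iff)

definition chain_basis :: "'x \<Rightarrow> 'x \<Rightarrow> int" where
  "chain_basis p = (\<lambda>y. of_bool (y = p))"

lemma chain2_chain_basis: "p \<in> carrier Q \<times> carrier Q \<Longrightarrow> chain2 Q (chain_basis p)"
  by (auto simp: chain2_def chain_basis_def)

lemma bar_d3_chain_basis:
  "bar_d3 Q (chain_basis (g, h, k)) y = chain_basis (h, k) y - chain_basis (g \<otimes>\<^bsub>Q\<^esub> h, k) y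
     + chain_basis (g, h \<otimes>\<^bsub>Q\<^esub> k) y - chain_basis (g, h) y"
  by (simp add: bar_d3_def chain_basis_def)

lemma bar_d3_superset:
  assumes "finite T" "{t. c t \<noteq> 0} \<subseteq> T"
  shows "bar_d3 Q c y = (\<Sum>t\<in>T. c t * bar_d3 Q (chain_basis t) y)"
proof -
  have "bar_d3 Q c y = (\<Sum>t\<in>T. (\<lambda>(g, h, k). c (g, h, k) * (of_bool (y = (h, k))
      - of_bool (y = (g \<otimes>\<^bsub>Q\<^esub> h, k)) + of_bool (y = (g, h \<otimes>\<^bsub>Q\<^esub> k)) - of_bool (y = (g, h)))) t)"
    unfolding bar_d3_def using assms by (intro sum.mono_neutral_left) (simp_all add: case_prod_unfold)
  also have "\<dots> = (\<Sum>t\<in>T. c t * bar_d3 Q (chain_basis t) y)"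
  proof (rule sum.cong[OF refl])
    fix t :: "'a \<times> 'a \<times> 'a"
    obtain g h k where t: "t = (g, h, k)"
      by (rule prod_cases3)
    show "(\<lambda>(g, h, k). c (g, h, k) * (of_bool (y = (h, k)) - of_bool (y = (g \<otimes>\<^bsub>Q\<^esub> h, k))
        + of_bool (y = (g, h \<otimes>\<^bsub>Q\<^esub> k)) - of_bool (y = (g, h)))) t
      = c t * bar_d3 Q (chain_basis t) y"
      unfolding t bar_d3_chain_basis by (simp add: chain_basis_def)
  qed
  finally show ?thesis .
qed

lemma chain3_add:
  assumes "chain3 Q a" "chain3 Q b"
  shows "chain3 Q (\<lambda>y. a y + b y)"
proof -
  have "a p \<noteq> 0 \<or> b p \<noteq> 0" if "a p + b p \<noteq> 0" for p
    using that by auto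
  then show ?thesis
    using assms finite_support_add[of a b] unfolding chain3_def by blast
qed

lemma boundary2_add:
  assumes "boundary2 Q a" "boundary2 Q b"
  shows "boundary2 Q (\<lambda>y. a y + b y)"
proof -
  obtain c d where c: "chain3 Q c" "\<And>p. bar_d3 Q c p = a p"
    and d: "chain3 Q d" "\<And>p. bar_d3 Q d p = b p"
    using assms by (auto simp: boundary2_def)
  define T where "T = {p. c p \<noteq> 0} \<union> {p. d p \<noteq> 0}"
  have T: "finite T"
    using c d by (simp add: T_def chain3_def)
  have "chain3 Q (\<lambda>t. c t + d t)"
    using c(1) d(1) by (rule chain3_add)
  moreover have "bar_d3 Q (\<lambda>t. c t + d t) y = a y + b y" for y
  proof -
    have "bar_d3 Q (\<lambda>t. c t + d t) y = (\<Sum>t\<in>T. (c t + d t) * bar_d3 Q (chain_basis t) y)"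
      using T by (intro bar_d3_superset) (auto simp: T_def)
    also have "\<dots> = bar_d3 Q c y + bar_d3 Q d y"
      using T by (simp add: bar_d3_superset[of T] T_def distrib_right sum.distrib)
    finally show ?thesis
      by (simp add: c(2) d(2))
  qed
  ultimately show ?thesis
    unfolding boundary2_def by blast
qed

lemma boundary2_uminus:
  assumes "boundary2 Q a"
  shows "boundary2 Q (\<lambda>y. - a y)"
proof -
  obtain c where "chain3 Q c" "\<And>p. bar_d3 Q c p = a p"
    using assms by (auto simp: boundary2_def)
  then have "chain3 Q (\<lambda>t. - c t)" "\<And>p. bar_d3 Q (\<lambda>t. - c t) p = - a p"
    by (auto simp: chain3_def bar_d3_def sum_negf split_beta)
  then show ?thesis
    unfolding boundary2_def by blast
qed

definition boundaries :: "('q, 'd) monoid_scheme \<Rightarrow> ('q \<times> 'q \<Rightarrow> int) set" where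
  "boundaries Q = {c. chain2 Q c \<and> boundary2 Q c}"

lemma boundaries_uminus: "c \<in> boundaries Q \<Longrightarrow> (\<lambda>y. - c y) \<in> boundaries Q"
  using chain2_scale[of Q c "- 1"] by (simp add: boundaries_def boundary2_uminus)

lemma subgroup_boundaries: "subgroup (boundaries Q) (chain_group Q)"
proof (rule chain_group.subgroupI)
  have "(\<lambda>y. 0) \<in> boundaries Q"
    unfolding boundaries_def boundary2_def
    by (auto simp: chain2_def chain3_def bar_d3_def intro!: exI[of _ "\<lambda>t. 0"])
  then show "boundaries Q \<noteq> {}"
    by blast
qed (auto simp: boundaries_def chain_group_inv chain2_add boundary2_add boundary2_uminus
         chain2_scale[of Q _ "- 1", simplified])

lemma bar_d3_chain_basis_in_boundaries:
  assumes "group Q" "g \<in> carrier Q" "h \<in> carrier Q" "k \<in> carrier Q"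
  shows "bar_d3 Q (chain_basis (g, h, k)) \<in> boundaries Q"
proof -
  have "chain3 Q (chain_basis (g, h, k))"
    using assms by (auto simp: chain3_def chain_basis_def)
  then have "boundary2 Q (bar_d3 Q (chain_basis (g, h, k)))"
    unfolding boundary2_def by blast
  moreover have "bar_d3 Q (chain_basis (g, h, k)) = (\<lambda>y. chain_basis (h, k) y
      - chain_basis (g \<otimes>\<^bsub>Q\<^esub> h, k) y + chain_basis (g, h \<otimes>\<^bsub>Q\<^esub> k) y - chain_basis (g, h) y)"
    by (rule ext) (rule bar_d3_chain_basis)
  moreover have "g \<otimes>\<^bsub>Q\<^esub> h \<in> carrier Q" "h \<otimes>\<^bsub>Q\<^esub> k \<in> carrier Q"
    using assms by (simp_all add: group.is_monoid monoid.m_closed)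
  ultimately show ?thesis
    using assms by (simp add: boundaries_def chain2_add chain2_diff chain2_chain_basis)
qed

lemma bar_d2_eq:
  "bar_d2 G c x = (\<Sum>p\<in>{p. c p \<noteq> 0}.
     c p * (of_bool (x = snd p) - of_bool (x = fst p \<otimes>\<^bsub>G\<^esub> snd p) + of_bool (x = fst p)))"
  unfolding bar_d2_def by (rule sum.cong) (simp_all add: split_beta)

lemma cycle2_coefficient_sum:
  assumes "cycle2 G z"
  shows "(\<Sum>p\<in>{p. z p \<noteq> 0}. z p) = 0"
proof -
  define S where "S = {p. z p \<noteq> 0}"
  define V where "V = fst ` S \<union> snd ` S \<union> (\<lambda>p. fst p \<otimes>\<^bsub>G\<^esub> snd p) ` S"
  have "finite S"
    using assms by (simp add: cycle2_def chain2_def S_def)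
  then have V: "finite V"
    by (simp add: V_def)
  have "0 = (\<Sum>x\<in>V. bar_d2 G z x)"
    using assms by (simp add: cycle2_def)
  also have "\<dots> = (\<Sum>p\<in>S. \<Sum>x\<in>V.
      z p * (of_bool (x = snd p) - of_bool (x = fst p \<otimes>\<^bsub>G\<^esub> snd p) + of_bool (x = fst p)))"
    unfolding bar_d2_eq S_def[symmetric] by (rule sum.swap)
  also have "\<dots> = (\<Sum>p\<in>S. z p)"
  proof (rule sum.cong[OF refl])
    fix p
    assume "p \<in> S"
    then have "snd p \<in> V" "fst p \<otimes>\<^bsub>G\<^esub> snd p \<in> V" "fst p \<in> V"
      by (auto simp: V_def)
    then show "(\<Sum>x\<in>V. z p * (of_bool (x = snd p) - of_bool (x = fst p \<otimes>\<^bsub>G\<^esub> snd p)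
        + of_bool (x = fst p))) = z p"
      using V by (simp add: sum_distrib_left[symmetric] sum.distrib sum_subtractf)
  qed
  finally show ?thesis
    by (simp add: S_def)
qed

lemma push2_eq_sum:
  assumes "finite {q. c q \<noteq> 0}"
  shows "push2 f c y = (\<Sum>q\<in>{q. c q \<noteq> 0}. c q * chain_basis (f (fst q), f (snd q)) y)"
proof -
  have "{q. c q \<noteq> 0 \<and> (f (fst q), f (snd q)) = y} = {q \<in> {q. c q \<noteq> 0}. (f (fst q), f (snd q)) = y}"
    by auto
  then have "push2 f c y = (\<Sum>q\<in>{q \<in> {q. c q \<noteq> 0}. (f (fst q), f (snd q)) = y}. c q)"
    by (simp add: push2_def)
  also have "\<dots> = (\<Sum>q\<in>{q. c q \<noteq> 0}. if (f (fst q), f (snd q)) = y then c q else 0)"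
    by (rule sum.inter_filter[OF assms])
  also have "\<dots> = (\<Sum>q\<in>{q. c q \<noteq> 0}. c q * chain_basis (f (fst q), f (snd q)) y)"
    by (rule sum.cong) (auto simp: chain_basis_def)
  finally show ?thesis .
qed

section \<open>Normalized 2-cocycles evaluated on 2-cycles\<close>

lemma (in comm_group) finprod_defects_over_cycle:
  assumes H: "monoid H" and z: "cycle2 H z" and \<psi>: "\<psi> \<in> carrier H \<rightarrow> carrier G"
  shows "(\<Otimes>p\<in>{p. z p \<noteq> 0}.
           (\<psi> (snd p) \<otimes> inv (\<psi> (fst p \<otimes>\<^bsub>H\<^esub> snd p)) \<otimes> \<psi> (fst p)) [^] z p) = \<one>"
proof -
  define S where "S = {p. z p \<noteq> 0}"
  define V where "V = fst ` S \<union> snd ` S \<union> (\<lambda>p. fst p \<otimes>\<^bsub>H\<^esub> snd p) ` S"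
  have S: "finite S" "S \<subseteq> carrier H \<times> carrier H"
    using z by (auto simp: cycle2_def chain2_def S_def)
  then have V: "finite V" "V \<subseteq> carrier H"
    using monoid.m_closed[OF H] by (auto simp: V_def)
  then have \<psi>V: "\<psi> \<in> V \<rightarrow> carrier G"
    using \<psi> by blast
  have "\<one> = (\<Otimes>x\<in>V. \<psi> x [^] bar_d2 H z x)"
    using z by (simp add: cycle2_def)
  also have "\<dots> = (\<Otimes>p\<in>S. \<Otimes>x\<in>V.
      \<psi> x [^] (z p * (of_bool (x = snd p) - of_bool (x = fst p \<otimes>\<^bsub>H\<^esub> snd p) + of_bool (x = fst p))))"
    unfolding bar_d2_eq S_def[symmetric] using S(1) \<psi>V by (rule finprod_int_pow_sum)
  also have "\<dots> = (\<Otimes>p\<in>S. (\<psi> (snd p) \<otimes> inv (\<psi> (fst p \<otimes>\<^bsub>H\<^esub> snd p)) \<otimes> \<psi> (fst p)) [^] z p)"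
  proof (rule finprod_cong')
    fix p
    assume "p \<in> S"
    then have "snd p \<in> V" "fst p \<otimes>\<^bsub>H\<^esub> snd p \<in> V" "fst p \<in> V"
      by (auto simp: V_def)
    then show "(\<Otimes>x\<in>V. \<psi> x [^] (z p * (of_bool (x = snd p) - of_bool (x = fst p \<otimes>\<^bsub>H\<^esub> snd p)
        + of_bool (x = fst p)))) = (\<psi> (snd p) \<otimes> inv (\<psi> (fst p \<otimes>\<^bsub>H\<^esub> snd p)) \<otimes> \<psi> (fst p)) [^] z p"
      by (rule finprod_int_pow_indicators[OF V(1) _ _ _ \<psi>V])
  next
    have "\<psi> (snd p) \<in> carrier G" "\<psi> (fst p \<otimes>\<^bsub>H\<^esub> snd p) \<in> carrier G" "\<psi> (fst p) \<in> carrier G"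
      if "p \<in> S" for p
      using that V(2) \<psi> by (auto simp: V_def)
    then show "(\<lambda>p. (\<psi> (snd p) \<otimes> inv (\<psi> (fst p \<otimes>\<^bsub>H\<^esub> snd p)) \<otimes> \<psi> (fst p)) [^] z p)
        \<in> S \<rightarrow> carrier G"
      by simp
  qed simp
  finally show ?thesis
    by (simp add: S_def)
qed

lemma (in normalized_cocycle) cocycle_product_over_cycle:
  assumes G: "group G" and f: "f \<in> hom G Q"
    and sym: "\<And>a b. a \<in> carrier G \<Longrightarrow> b \<in> carrier G \<Longrightarrow>
      w (f a) (f b) = w (f b) (f a) \<and> f a \<otimes>\<^bsub>Q\<^esub> f b = f b \<otimes>\<^bsub>Q\<^esub> f a"
    and z: "cycle2 G z"
  shows "(\<Otimes>\<^bsub>M\<^esub> p\<in>{p. z p \<noteq> 0}. w (f (fst p)) (f (snd p)) [^]\<^bsub>M\<^esub> z p) = \<one>\<^bsub>M\<^esub>"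
proof -
  interpret G: group G by (rule G)
  interpret f: group_hom G Q f
    using f by (simp add: group_hom_def group_hom_axioms_def G.is_group Q.is_group)
  define A where "A = f ` carrier G"
  have A: "subgroup A Q"
    unfolding A_def by (rule f.subgroup_img_is_subgroup[OF G.subgroup_self])
  define EA where "EA = E\<lparr>carrier := carrier M \<times> A\<rparr>"
  have EA: "comm_group EA"
    unfolding EA_def by (rule comm_group_cocycle_ext_restrict[OF A]) (auto simp: A_def sym)
  interpret EA: comm_group EA by (rule EA)
  define \<psi> where "\<psi> x = (\<one>\<^bsub>M\<^esub>, f x)" for x
  define \<iota> :: "'m \<Rightarrow> 'm \<times> 'q" where "\<iota> m = (m, \<one>\<^bsub>Q\<^esub>)" for m
  have \<iota>: "\<iota> \<in> hom M EA"
    using subgroup.one_closed[OF A] by (intro homI) (auto simp: \<iota>_def EA_def)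
  have \<psi>: "\<psi> \<in> carrier G \<rightarrow> carrier EA"
    by (auto simp: \<psi>_def EA_def A_def)
  have defect: "\<psi> h \<otimes>\<^bsub>EA\<^esub> inv\<^bsub>EA\<^esub> (\<psi> (g \<otimes>\<^bsub>G\<^esub> h)) \<otimes>\<^bsub>EA\<^esub> \<psi> g = \<iota> (w (f g) (f h))"
    if "g \<in> carrier G" "h \<in> carrier G" for g h
  proof -
    have carr: "\<psi> g \<in> carrier EA" "\<psi> h \<in> carrier EA" "\<psi> (g \<otimes>\<^bsub>G\<^esub> h) \<in> carrier EA"
      "\<iota> (w (f g) (f h)) \<in> carrier EA"
      using that \<psi> hom_in_carrier[OF \<iota>] by auto
    have "\<psi> h \<otimes>\<^bsub>EA\<^esub> inv\<^bsub>EA\<^esub> (\<psi> (g \<otimes>\<^bsub>G\<^esub> h)) \<otimes>\<^bsub>EA\<^esub> \<psi> g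
        = (\<psi> g \<otimes>\<^bsub>EA\<^esub> \<psi> h) \<otimes>\<^bsub>EA\<^esub> inv\<^bsub>EA\<^esub> (\<psi> (g \<otimes>\<^bsub>G\<^esub> h))"
      using carr by (simp add: EA.m_ac)
    also have "\<dots> = \<iota> (w (f g) (f h))"
    proof (rule iffD2[OF EA.inv_solve_right'])
      show "\<psi> g \<otimes>\<^bsub>EA\<^esub> \<psi> h = \<iota> (w (f g) (f h)) \<otimes>\<^bsub>EA\<^esub> \<psi> (g \<otimes>\<^bsub>G\<^esub> h)"
        using that by (simp add: \<psi>_def \<iota>_def EA_def)
    qed (use carr in auto)
    finally show ?thesis .
  qed
  define S where "S = {p. z p \<noteq> 0}"
  have S: "S \<subseteq> carrier G \<times> carrier G"
    using z by (auto simp: cycle2_def chain2_def S_def)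
  have "\<one>\<^bsub>EA\<^esub> = (\<Otimes>\<^bsub>EA\<^esub> p\<in>S.
      (\<psi> (snd p) \<otimes>\<^bsub>EA\<^esub> inv\<^bsub>EA\<^esub> (\<psi> (fst p \<otimes>\<^bsub>G\<^esub> snd p)) \<otimes>\<^bsub>EA\<^esub> \<psi> (fst p)) [^]\<^bsub>EA\<^esub> z p)"
    unfolding S_def by (rule EA.finprod_defects_over_cycle[OF G.is_monoid z \<psi>, symmetric])
  also have "\<dots> = (\<Otimes>\<^bsub>EA\<^esub> p\<in>S. \<iota> (w (f (fst p)) (f (snd p)) [^]\<^bsub>M\<^esub> z p))"
    using S defect hom_int_pow[OF \<iota> _ M.is_group EA.is_group] hom_in_carrier[OF \<iota>]
    by (intro EA.finprod_cong') auto
  also have "\<dots> = \<iota> (\<Otimes>\<^bsub>M\<^esub> p\<in>S. w (f (fst p)) (f (snd p)) [^]\<^bsub>M\<^esub> z p)"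
    using S by (intro hom_finprod_comm_group[OF M.comm_group_axioms EA \<iota>, symmetric]) auto
  finally show ?thesis
    by (simp add: \<iota>_def EA_def S_def)
qed

section \<open>The universal cocycle\<close>

definition chains_mod_boundaries :: "('q, 'd) monoid_scheme \<Rightarrow> ('q \<times> 'q \<Rightarrow> int) set monoid" where
  "chains_mod_boundaries Q = chain_group Q Mod boundaries Q"

definition chain_class :: "('q, 'd) monoid_scheme \<Rightarrow> ('q \<times> 'q \<Rightarrow> int) \<Rightarrow> ('q \<times> 'q \<Rightarrow> int) set" where
  "chain_class Q c = boundaries Q #>\<^bsub>chain_group Q\<^esub> c"

lemma normal_boundaries: "boundaries Q \<lhd> chain_group Q"
  by (rule chain_group.subgroup_imp_normal[OF subgroup_boundaries])

lemma comm_group_chains_mod_boundaries: "comm_group (chains_mod_boundaries Q)"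
  unfolding chains_mod_boundaries_def by (rule chain_group.abelian_FactGroup[OF subgroup_boundaries])

interpretation chains_mod_boundaries: comm_group "chains_mod_boundaries Q"
  by (rule comm_group_chains_mod_boundaries)

lemma group_hom_chain_class: "group_hom (chain_group Q) (chains_mod_boundaries Q) (chain_class Q)"
  unfolding group_hom_def group_hom_axioms_def chains_mod_boundaries_def chain_class_def
  using normal.r_coset_hom_Mod[OF normal_boundaries] normal.factorgroup_is_group[OF normal_boundaries]
  by (simp add: chain_group.is_group)
    blast

lemma chain_class_eq_one_iff:
  assumes "c \<in> carrier (chain_group Q)"
  shows "chain_class Q c = \<one>\<^bsub>chains_mod_boundaries Q\<^esub> \<longleftrightarrow> c \<in> boundaries Q"
  using chain_group.rcos_self[OF assms subgroup_boundaries]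
    subgroup.rcos_const[OF subgroup_boundaries chain_group.is_group]
  by (auto simp: chain_class_def chains_mod_boundaries_def)

lemma chain_class_eq:
  assumes c: "c \<in> carrier (chain_group Q)" and c': "c' \<in> carrier (chain_group Q)"
    and diff: "(\<lambda>y. c y - c' y) \<in> boundaries Q"
  shows "chain_class Q c = chain_class Q c'"
proof -
  interpret quotient: group_hom "chain_group Q" "chains_mod_boundaries Q" "chain_class Q"
    by (rule group_hom_chain_class)
  have diff_carrier: "(\<lambda>y. c y - c' y) \<in> carrier (chain_group Q)"
    using diff by (simp add: boundaries_def)
  have "chain_class Q c = chain_class Q ((\<lambda>y. c y - c' y) \<otimes>\<^bsub>chain_group Q\<^esub> c')"
    by simp
  also have "\<dots> = chain_class Q (\<lambda>y. c y - c' y) \<otimes>\<^bsub>chains_mod_boundaries Q\<^esub> chain_class Q c'"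
    using diff_carrier c' by (rule quotient.hom_mult)
  also have "\<dots> = chain_class Q c'"
    using diff diff_carrier c' by (simp add: chain_class_eq_one_iff)
  finally show ?thesis .
qed

definition normalized_basis :: "('q, 'd) monoid_scheme \<Rightarrow> 'q \<Rightarrow> 'q \<Rightarrow> 'q \<times> 'q \<Rightarrow> int" where
  "normalized_basis Q q q' = (\<lambda>y. chain_basis (q, q') y - chain_basis (\<one>\<^bsub>Q\<^esub>, \<one>\<^bsub>Q\<^esub>) y)"

definition bar_cocycle :: "('q, 'd) monoid_scheme \<Rightarrow> 'q \<Rightarrow> 'q \<Rightarrow> ('q \<times> 'q \<Rightarrow> int) set" where
  "bar_cocycle Q q q' = chain_class Q (normalized_basis Q q q')"

lemma normalized_basis_carrier:
  "group Q \<Longrightarrow> q \<in> carrier Q \<Longrightarrow> q' \<in> carrier Q \<Longrightarrow>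
   normalized_basis Q q q' \<in> carrier (chain_group Q)"
  by (simp add: normalized_basis_def chain2_diff chain2_chain_basis group.is_monoid monoid.one_closed)

lemma normalized_basis_cocycle_identity:
  "normalized_basis Q q q' y + normalized_basis Q (q \<otimes>\<^bsub>Q\<^esub> q') q'' y
   - (normalized_basis Q q' q'' y + normalized_basis Q q (q' \<otimes>\<^bsub>Q\<^esub> q'') y)
   = - bar_d3 Q (chain_basis (q, q', q'')) y"
  by (simp add: normalized_basis_def bar_d3_chain_basis)

lemma normalized_basis_one_left:
  "group Q \<Longrightarrow> q \<in> carrier Q \<Longrightarrow>
   normalized_basis Q \<one>\<^bsub>Q\<^esub> q = bar_d3 Q (chain_basis (\<one>\<^bsub>Q\<^esub>, \<one>\<^bsub>Q\<^esub>, q))"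
  by (simp add: fun_eq_iff normalized_basis_def bar_d3_chain_basis group.is_monoid)

lemma normalized_basis_one_right:
  "group Q \<Longrightarrow> q \<in> carrier Q \<Longrightarrow>
   normalized_basis Q q \<one>\<^bsub>Q\<^esub> = (\<lambda>y. - bar_d3 Q (chain_basis (q, \<one>\<^bsub>Q\<^esub>, \<one>\<^bsub>Q\<^esub>)) y)"
  by (simp add: fun_eq_iff normalized_basis_def bar_d3_chain_basis group.is_monoid)

lemma normalized_cocycle_bar_cocycle:
  assumes "group Q"
  shows "normalized_cocycle (chains_mod_boundaries Q) Q (bar_cocycle Q)"
proof -
  interpret Q: group Q by (rule assms)
  interpret quotient: group_hom "chain_group Q" "chains_mod_boundaries Q" "chain_class Q"
    by (rule group_hom_chain_class)
  let ?b = "normalized_basis Q"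
  note D = normalized_basis_carrier[OF assms]
  note boundary = bar_d3_chain_basis_in_boundaries[OF assms]
  show ?thesis
  proof (intro normalized_cocycle.intro comm_group_chains_mod_boundaries assms
      normalized_cocycle_axioms.intro)
    fix q q'
    assume "q \<in> carrier Q" "q' \<in> carrier Q"
    then show "bar_cocycle Q q q' \<in> carrier (chains_mod_boundaries Q)"
      using D by (simp add: bar_cocycle_def)
  next
    fix q q' q''
    assume q: "q \<in> carrier Q" "q' \<in> carrier Q" "q'' \<in> carrier Q"
    have "bar_cocycle Q q q' \<otimes>\<^bsub>chains_mod_boundaries Q\<^esub> bar_cocycle Q (q \<otimes>\<^bsub>Q\<^esub> q') q''
        = chain_class Q (?b q q' \<otimes>\<^bsub>chain_group Q\<^esub> ?b (q \<otimes>\<^bsub>Q\<^esub> q') q'')"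
      unfolding bar_cocycle_def using q D by (intro quotient.hom_mult[symmetric]) auto
    also have "\<dots> = chain_class Q (?b q' q'' \<otimes>\<^bsub>chain_group Q\<^esub> ?b q (q' \<otimes>\<^bsub>Q\<^esub> q''))"
    proof (rule chain_class_eq)
      show "(\<lambda>y. (?b q q' \<otimes>\<^bsub>chain_group Q\<^esub> ?b (q \<otimes>\<^bsub>Q\<^esub> q') q'') y
          - (?b q' q'' \<otimes>\<^bsub>chain_group Q\<^esub> ?b q (q' \<otimes>\<^bsub>Q\<^esub> q'')) y)
          \<in> boundaries Q"
        using boundaries_uminus[OF boundary[OF q]] by (simp add: normalized_basis_cocycle_identity)
    qed (use q D in \<open>auto intro: chain2_add\<close>)
    also have "\<dots> = bar_cocycle Q q' q'' \<otimes>\<^bsub>chains_mod_boundaries Q\<^esub> bar_cocycle Q q (q' \<otimes>\<^bsub>Q\<^esub> q'')"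
      unfolding bar_cocycle_def using q D by (intro quotient.hom_mult) auto
    finally show "bar_cocycle Q q q' \<otimes>\<^bsub>chains_mod_boundaries Q\<^esub> bar_cocycle Q (q \<otimes>\<^bsub>Q\<^esub> q') q''
        = bar_cocycle Q q' q'' \<otimes>\<^bsub>chains_mod_boundaries Q\<^esub> bar_cocycle Q q (q' \<otimes>\<^bsub>Q\<^esub> q'')" .
  next
    fix q
    assume q: "q \<in> carrier Q"
    have "?b \<one>\<^bsub>Q\<^esub> q \<in> boundaries Q"
      using q boundary by (simp add: normalized_basis_one_left[OF assms])
    then show "bar_cocycle Q \<one>\<^bsub>Q\<^esub> q = \<one>\<^bsub>chains_mod_boundaries Q\<^esub>"
      using q chain_class_eq_one_iff[OF D] by (simp add: bar_cocycle_def)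
  next
    fix q
    assume q: "q \<in> carrier Q"
    have "?b q \<one>\<^bsub>Q\<^esub> \<in> boundaries Q"
      using q boundaries_uminus[OF boundary] by (simp add: normalized_basis_one_right[OF assms])
    then show "bar_cocycle Q q \<one>\<^bsub>Q\<^esub> = \<one>\<^bsub>chains_mod_boundaries Q\<^esub>"
      using q chain_class_eq_one_iff[OF D] by (simp add: bar_cocycle_def)
  qed
qed

lemma push2_cycle_eq_finprod:
  assumes Q: "group Q" and f: "f \<in> carrier G \<rightarrow> carrier Q" and z: "cycle2 G z"
  shows "push2 f z = (\<Otimes>\<^bsub>chain_group Q\<^esub> p\<in>{p. z p \<noteq> 0}.
           normalized_basis Q (f (fst p)) (f (snd p)) [^]\<^bsub>chain_group Q\<^esub> z p)"
proof -
  define S where "S = {p. z p \<noteq> 0}"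
  define D where "D p = normalized_basis Q (f (fst p)) (f (snd p))" for p
  have S: "finite S" "S \<subseteq> carrier G \<times> carrier G"
    using z by (auto simp: cycle2_def chain2_def S_def)
  have D: "D p \<in> carrier (chain_group Q)" if "p \<in> S" for p
    unfolding D_def using that S funcset_mem[OF f] by (intro normalized_basis_carrier[OF Q]) auto
  have scaled: "(\<lambda>y. z p * D p y) \<in> carrier (chain_group Q)" if "p \<in> S" for p
    using chain2_scale[of Q "D p" "z p"] D[OF that] by simp
  have "push2 f z = (\<lambda>y. \<Sum>p\<in>S. z p * D p y)"
    using S push2_eq_sum[of z f] cycle2_coefficient_sum[OF z]
    by (simp add: fun_eq_iff D_def normalized_basis_def S_def right_diff_distrib sum_subtractf
        flip: sum_distrib_right)
  also have "\<dots> = finprod (chain_group Q) (\<lambda>p y. z p * D p y) S"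
    using S scaled by (subst chain_group_finprod) auto
  also have "\<dots> = finprod (chain_group Q) (\<lambda>p. D p [^]\<^bsub>chain_group Q\<^esub> z p) S"
    using D scaled by (intro chain_group.finprod_cong') (auto simp: chain_group_int_pow)
  finally show ?thesis
    by (simp add: S_def D_def)
qed

lemma bar_cocycle_product_over_cycle:
  assumes Q: "group Q" and f: "f \<in> carrier G \<rightarrow> carrier Q" and z: "cycle2 G z"
  shows "(\<Otimes>\<^bsub>chains_mod_boundaries Q\<^esub> p\<in>{p. z p \<noteq> 0}.
           bar_cocycle Q (f (fst p)) (f (snd p)) [^]\<^bsub>chains_mod_boundaries Q\<^esub> z p)
         = chain_class Q (push2 f z)"
proof -
  interpret quotient: group_hom "chain_group Q" "chains_mod_boundaries Q" "chain_class Q"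
    by (rule group_hom_chain_class)
  have D: "normalized_basis Q (f (fst p)) (f (snd p)) \<in> carrier (chain_group Q)"
    if "p \<in> {p. z p \<noteq> 0}" for p
  proof -
    have "p \<in> carrier G \<times> carrier G"
      using that z unfolding cycle2_def chain2_def by blast
    then show ?thesis
      using funcset_mem[OF f] by (intro normalized_basis_carrier[OF Q]) auto
  qed
  have "(\<Otimes>\<^bsub>chains_mod_boundaries Q\<^esub> p\<in>{p. z p \<noteq> 0}.
           chain_class Q (normalized_basis Q (f (fst p)) (f (snd p))) [^]\<^bsub>chains_mod_boundaries Q\<^esub> z p)
      = (\<Otimes>\<^bsub>chains_mod_boundaries Q\<^esub> p\<in>{p. z p \<noteq> 0}.
           chain_class Q (normalized_basis Q (f (fst p)) (f (snd p)) [^]\<^bsub>chain_group Q\<^esub> z p))"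
    using D by (intro chains_mod_boundaries.finprod_cong') (auto simp: quotient.hom_int_pow)
  also have "\<dots> = chain_class Q (push2 f z)"
    unfolding push2_cycle_eq_finprod[OF Q f z]
    by (rule hom_finprod_comm_group[symmetric, OF comm_group_chain_group
          comm_group_chains_mod_boundaries quotient.homh])
      (use D in \<open>auto simp del: chain_group_carrier\<close>)
  finally show ?thesis
    unfolding bar_cocycle_def .
qed

theorem H2_map_zero_if_bar_cocycle_symmetric:
  assumes G: "group G" and Q: "group Q" and f: "f \<in> hom G Q"
    and sym: "\<And>a b. a \<in> carrier G \<Longrightarrow> b \<in> carrier G \<Longrightarrow>
      bar_cocycle Q (f a) (f b) = bar_cocycle Q (f b) (f a) \<and> f a \<otimes>\<^bsub>Q\<^esub> f b = f b \<otimes>\<^bsub>Q\<^esub> f a"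
  shows "H2_map_zero G Q f"
  unfolding H2_map_zero_def
proof (intro allI impI)
  fix z
  assume z: "cycle2 G z"
  interpret normalized_cocycle "chains_mod_boundaries Q" Q "bar_cocycle Q"
    using Q by (rule normalized_cocycle_bar_cocycle)
  have f_carrier: "f \<in> carrier G \<rightarrow> carrier Q"
    using f by (simp add: hom_def)
  have "push2 f z \<in> carrier (chain_group Q)"
    using z funcset_mem[OF f_carrier] unfolding push2_cycle_eq_finprod[OF Q f_carrier z]
    by (intro chain_group.finprod_closed)
      (auto intro!: chain_group.int_pow_closed normalized_basis_carrier[OF Q]
        simp: cycle2_def chain2_def simp del: chain_group_carrier)
  moreover have "chain_class Q (push2 f z) = \<one>\<^bsub>chains_mod_boundaries Q\<^esub>"
    using cocycle_product_over_cycle[OF G f sym z] bar_cocycle_product_over_cycle[OF Q f_carrier z]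
    by simp
  ultimately have "push2 f z \<in> boundaries Q"
    using chain_class_eq_one_iff by blast
  then show "boundary2 Q (push2 f z)"
    by (simp add: boundaries_def)
qed

theorem lemma5p4:
  fixes B :: "('a, 'b) monoid_scheme" and k :: nat
  assumes "group B" and "k \<ge> 1"
  shows "H2_map_zero (B\<lparr>carrier := lower_central B k\<rparr>)
           (B Mod lower_central B (2 * k - 1))
           ((\<lambda>x. lower_central B (2 * k - 1) #>\<^bsub>B\<^esub> x) \<circ> id)"
proof -
  interpret B: group B by (rule assms(1))
  define N where "N = lower_central B (2 * k - 1)"
  interpret N: normal N B
    unfolding N_def by (rule B.lower_central_normal)
  have Q: "group (B Mod N)"
    by (rule N.factorgroup_is_group)
  interpret normalized_cocycle "chains_mod_boundaries (B Mod N)" "B Mod N" "bar_cocycle (B Mod N)"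
    using Q by (rule normalized_cocycle_bar_cocycle)
  have Q_trivial: "lower_central (B Mod N) (2 * k - 1) = {\<one>\<^bsub>B Mod N\<^esub>}"
    unfolding N_def by (rule B.lower_central_Mod_lower_central)
  have "bar_cocycle (B Mod N) (N #>\<^bsub>B\<^esub> a) (N #>\<^bsub>B\<^esub> b) = bar_cocycle (B Mod N) (N #>\<^bsub>B\<^esub> b) (N #>\<^bsub>B\<^esub> a)
      \<and> (N #>\<^bsub>B\<^esub> a) \<otimes>\<^bsub>B Mod N\<^esub> (N #>\<^bsub>B\<^esub> b) = (N #>\<^bsub>B\<^esub> b) \<otimes>\<^bsub>B Mod N\<^esub> (N #>\<^bsub>B\<^esub> a)"
    if "a \<in> lower_central B k" "b \<in> lower_central B k" for a b
    using that assms(2)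
    by (intro cocycle_symmetric_on_lower_central[OF _ Q_trivial])
      (auto simp flip: N.image_lower_central_Mod)
  moreover have "(\<lambda>x. N #>\<^bsub>B\<^esub> x) \<in> hom (B\<lparr>carrier := lower_central B k\<rparr>) (B Mod N)"
    using N.r_coset_hom_Mod B.lower_central_carrier by (auto simp: hom_def)
  ultimately show ?thesis
    unfolding N_def[symmetric] comp_id
    using B.subgroup_imp_group[OF B.lower_central_subgroup] Q
    by (intro H2_map_zero_if_bar_cocycle_symmetric) auto
qed

end
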